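(* Let $k\geq 2$ and let $G=G_1\square G_2 \square \cdots \square G_k$ be a Cartesian prime factorization of $G$ into mutually non-isomorphic connected graphs. For $i=1,\ldots,k$ let $Q_i=G_1\square\cdots\square G_{i-1}\square G_{i+1}\square\cdots\square G_k$, so $|Q_i|=|G|/|G_i|$. Then $$\theta (G)=\max \left\{ \left(\theta(G_i)-1\right)\cdot |Q_i|\; : \; i=1,\dots,k \right\}+1.$$
   Context: Graphs are finite and simple; $|H|$ denotes the number of vertices of $H$. A vertex coloring of a graph is distinguishing if the identity is the only automorphism preserving it (mapping every vertex to a vertex of the same color). The distinguishing threshold $\theta(H)$ of a graph $H$ is the minimum number $t$ such that for every $k\geq t$, every vertex coloring of $H$ using $k$ colors is distinguishing. The Cartesian product $G\square H$ has vertex set $V(G)\times V(H)$, with $(g,h)\sim(g',h')$ iff either $g=g'$ and $hh'\in E(H)$, or $gg'\in E(G)$ and $h=h'$; a graph is prime (with respect to the Cartesian product) if it is not isomorphic to a Cartesian product of two graphs both non-isomorphic to it. *)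

theory Defs
  imports "HOL-Library.FuncSet"
begin

type_synonym 'a graph = "'a set \<times> 'a set set"

definition verts :: "'a graph \<Rightarrow> 'a set" where "verts G = fst G"
definition edges :: "'a graph \<Rightarrow> 'a set set" where "edges G = snd G"

definition graph :: "'a graph \<Rightarrow> bool" where
  "graph G \<longleftrightarrow> finite (verts G) \<and>
     (\<forall>e\<in>edges G. \<exists>u v. e = {u, v} \<and> u \<noteq> v \<and> u \<in> verts G \<and> v \<in> verts G)"

definition adj :: "'a graph \<Rightarrow> 'a \<Rightarrow> 'a \<Rightarrow> bool" where
  "adj G u v \<longleftrightarrow> {u, v} \<in> edges G"

definition connected_graph :: "'a graph \<Rightarrow> bool" where
  "connected_graph G \<longleftrightarrow> verts G \<noteq> {} \<and>
     (\<forall>u\<in>verts G. \<forall>v\<in>verts G. (adj G)\<^sup>*\<^sup>* u v)"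

definition graph_iso :: "'a graph \<Rightarrow> 'b graph \<Rightarrow> ('a \<Rightarrow> 'b) \<Rightarrow> bool" where
  "graph_iso G H f \<longleftrightarrow> bij_betw f (verts G) (verts H) \<and>
     (\<forall>u\<in>verts G. \<forall>v\<in>verts G. adj G u v \<longleftrightarrow> adj H (f u) (f v))"

definition isomorphic :: "'a graph \<Rightarrow> 'b graph \<Rightarrow> bool" where
  "isomorphic G H \<longleftrightarrow> (\<exists>f. graph_iso G H f)"

definition automorphism :: "'a graph \<Rightarrow> ('a \<Rightarrow> 'a) \<Rightarrow> bool" where
  "automorphism G f \<longleftrightarrow> graph_iso G G f"

definition coloring_with :: "'a graph \<Rightarrow> ('a \<Rightarrow> nat) \<Rightarrow> nat \<Rightarrow> bool" where
  "coloring_with G c k \<longleftrightarrow> card (c ` verts G) = k"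

definition distinguishing :: "'a graph \<Rightarrow> ('a \<Rightarrow> nat) \<Rightarrow> bool" where
  "distinguishing G c \<longleftrightarrow>
     (\<forall>f. automorphism G f \<and> (\<forall>v\<in>verts G. c (f v) = c v) \<longrightarrow> (\<forall>v\<in>verts G. f v = v))"

definition dist_threshold :: "'a graph \<Rightarrow> nat" where
  "dist_threshold G = (LEAST t. t \<ge> 1 \<and>
     (\<forall>k\<ge>t. \<forall>c. coloring_with G c k \<longrightarrow> distinguishing G c))"

definition cart_prod :: "'a graph \<Rightarrow> 'b graph \<Rightarrow> ('a \<times> 'b) graph" where
  "cart_prod G H = (verts G \<times> verts H,
     {{(g, h), (g', h')} | g h g' h'.
        (g = g' \<and> g \<in> verts G \<and> {h, h'} \<in> edges H) \<or>
        ({g, g'} \<in> edges G \<and> h = h' \<and> h \<in> verts H)})"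

text \<open>Factors of a finite graph H have at most |H| vertices,
  so it suffices to let them range over graphs on the vertex type of H.\<close>
definition prime_graph :: "'a graph \<Rightarrow> bool" where
  "prime_graph (H :: 'a graph) \<longleftrightarrow> \<not> (\<exists>(A :: 'a graph) (B :: 'a graph). graph A \<and> graph B \<and>
       isomorphic H (cart_prod A B) \<and> \<not> isomorphic A H \<and> \<not> isomorphic B H)"

definition cart_prod_family :: "(nat \<Rightarrow> 'a graph) \<Rightarrow> nat set \<Rightarrow> (nat \<Rightarrow> 'a) graph" where
  "cart_prod_family Gs I = (PiE I (\<lambda>i. verts (Gs i)),
     {{x, y} | x y. x \<in> PiE I (\<lambda>i. verts (Gs i)) \<and> y \<in> PiE I (\<lambda>i. verts (Gs i)) \<and>
        (\<exists>i\<in>I. {x i, y i} \<in> edges (Gs i) \<and> (\<forall>j\<in>I. j \<noteq> i \<longrightarrow> x j = y j))})"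

end

(*
  In a Cartesian product of connected graphs the distance is the sum of the coordinate
  distances. Hence every vertex on a geodesic between two vertices of a G_i-layer lies in that
  layer, and the image S of a layer under an automorphism is closed under exchanging single
  coordinates. Such a set induces the Cartesian product of its projection to one coordinate
  and its projection to the others; since S is isomorphic to the prime graph G_i, it varies in
  one coordinate only. So automorphisms map layers onto layers, and as the factors are pairwise
  non-isomorphic, every automorphism f acts coordinatewise, f x = (s_1 x_1, ..., s_k x_k) with
  s_i in Aut(G_i).

  If a colouring of G is preserved by such an f with s_l not the identity, colour each vertex b
  of G_l by the set of colours on the fibre x_l = b: this colouring of G_l is preserved by s_l,
  so it has fewer than theta(G_l) colours, and each fibre carries at most |Q_l| colours.
  Conversely, a non-distinguishing colouring c of G_l with theta(G_l) - 1 colours gives the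
  non-distinguishing colouring x |-> (c x_l, (x_j)_{j <> l}) of G with (theta(G_l) - 1) |Q_l|
  colours.
*)
theory Submission
  imports Defs
begin

lemma graph_adjD: "graph H \<Longrightarrow> adj H u v \<Longrightarrow> u \<in> verts H \<and> v \<in> verts H \<and> u \<noteq> v"
  unfolding graph_def adj_def by (auto simp: doubleton_eq_iff)

lemma graph_edgeE:
  assumes "graph H" "e \<in> edges H"
  obtains u v where "e = {u, v}" "u \<noteq> v" "u \<in> verts H" "v \<in> verts H"
  using assms unfolding graph_def by blast

lemma graph_finite_verts: "graph H \<Longrightarrow> finite (verts H)"
  unfolding graph_def by simp

lemma graph_iso_bij_betw: "graph_iso G H f \<Longrightarrow> bij_betw f (verts G) (verts H)"
  unfolding graph_iso_def by simp

lemma graph_iso_adj: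
  "graph_iso G H f \<Longrightarrow> u \<in> verts G \<Longrightarrow> v \<in> verts G \<Longrightarrow> adj H (f u) (f v) \<longleftrightarrow> adj G u v"
  unfolding graph_iso_def by simp

lemma graph_iso_comp: "graph_iso A B f \<Longrightarrow> graph_iso B C g \<Longrightarrow> graph_iso A C (g \<circ> f)"
  unfolding graph_iso_def by (auto simp: bij_betw_trans bij_betw_apply)

lemma graph_iso_inv_into: "graph_iso A B f \<Longrightarrow> graph_iso B A (inv_into (verts A) f)"
proof -
  assume iso: "graph_iso A B f"
  then have bij: "bij_betw f (verts A) (verts B)" by (rule graph_iso_bij_betw)
  have "adj B u v \<longleftrightarrow> adj A (inv_into (verts A) f u) (inv_into (verts A) f v)"
    if "u \<in> verts B" "v \<in> verts B" for u v
    using graph_iso_adj[OF iso, of "inv_into (verts A) f u" "inv_into (verts A) f v"] that bij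
    by (simp add: bij_betw_def inv_into_into f_inv_into_f)
  then show ?thesis
    unfolding graph_iso_def using bij_betw_inv_into[OF bij] by blast
qed

lemma graph_iso_cong:
  assumes "graph_iso G H f" "\<And>v. v \<in> verts G \<Longrightarrow> f v = g v"
  shows "graph_iso G H g"
  using assms unfolding graph_iso_def by (simp cong: bij_betw_cong)

lemma isomorphic_trans: "isomorphic A B \<Longrightarrow> isomorphic B C \<Longrightarrow> isomorphic A C"
  unfolding isomorphic_def using graph_iso_comp by blast

lemma isomorphic_card_verts: "isomorphic A B \<Longrightarrow> card (verts A) = card (verts B)"
  unfolding isomorphic_def graph_iso_def using bij_betw_same_card by blast

lemma automorphism_bij_betw: "automorphism H f \<Longrightarrow> bij_betw f (verts H) (verts H)"
  unfolding automorphism_def graph_iso_def by simp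

lemma automorphism_inv_into: "automorphism H f \<Longrightarrow> automorphism H (inv_into (verts H) f)"
  unfolding automorphism_def by (rule graph_iso_inv_into)

definition induced :: "'a graph \<Rightarrow> 'a set \<Rightarrow> 'a graph" where
  "induced H W = (W, {e \<in> edges H. e \<subseteq> W})"

lemma verts_induced [simp]: "verts (induced H W) = W"
  by (simp add: induced_def verts_def)

lemma edges_induced: "edges (induced H W) = {e \<in> edges H. e \<subseteq> W}"
  by (simp add: induced_def edges_def)

lemma adj_induced: "adj (induced H W) u v \<longleftrightarrow> adj H u v \<and> u \<in> W \<and> v \<in> W"
  by (auto simp: adj_def edges_induced)

lemma graph_induced:
  assumes "graph H" "W \<subseteq> verts H"
  shows "graph (induced H W)"
  unfolding graph_def verts_induced
proof (intro conjI ballI)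
  show "finite W" using assms unfolding graph_def by (blast intro: finite_subset)
  fix e assume "e \<in> edges (induced H W)"
  then have "e \<in> edges H" "e \<subseteq> W" by (simp_all add: edges_induced)
  then obtain u v where "e = {u, v}" "u \<noteq> v"
    using graph_edgeE[OF assms(1)] by metis
  with \<open>e \<subseteq> W\<close> show "\<exists>u v. e = {u, v} \<and> u \<noteq> v \<and> u \<in> W \<and> v \<in> W" by blast
qed

lemma graph_iso_induced:
  "graph_iso H H' f \<Longrightarrow> W \<subseteq> verts H \<Longrightarrow> graph_iso (induced H W) (induced H' (f ` W)) f"
proof -
  assume iso: "graph_iso H H' f" and W: "W \<subseteq> verts H"
  have "inj_on f W"
    using graph_iso_bij_betw[OF iso] W by (auto simp: bij_betw_def intro: inj_on_subset)
  moreover have "adj (induced H W) u v \<longleftrightarrow> adj (induced H' (f ` W)) (f u) (f v)"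
    if "u \<in> W" "v \<in> W" for u v
    using that W graph_iso_adj[OF iso, of u v] by (auto simp: adj_induced)
  ultimately show ?thesis unfolding graph_iso_def by (simp add: inj_on_imp_bij_betw)
qed

definition map_graph :: "('a \<Rightarrow> 'b) \<Rightarrow> 'a graph \<Rightarrow> 'b graph" where
  "map_graph g H = (g ` verts H, (`) g ` edges H)"

lemma verts_map_graph: "verts (map_graph g H) = g ` verts H"
  and edges_map_graph: "edges (map_graph g H) = (`) g ` edges H"
  by (simp_all add: map_graph_def verts_def edges_def)

lemma graph_map_graph:
  assumes "graph H" "inj_on g (verts H)"
  shows "graph (map_graph g H)"
  unfolding graph_def verts_map_graph edges_map_graph
proof (intro conjI ballI)
  show "finite (g ` verts H)" using graph_finite_verts[OF assms(1)] by simp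
  fix e' assume "e' \<in> (`) g ` edges H"
  then obtain e where e: "e \<in> edges H" and e': "e' = g ` e" by blast
  obtain u v where "e = {u, v}" "u \<noteq> v" "u \<in> verts H" "v \<in> verts H"
    using assms(1) e by (rule graph_edgeE)
  moreover have "g u \<noteq> g v" using inj_on_contraD[OF assms(2)] calculation by blast
  ultimately show "\<exists>u v. e' = {u, v} \<and> u \<noteq> v \<and> u \<in> g ` verts H \<and> v \<in> g ` verts H"
    using e' by auto
qed

lemma graph_iso_map_graph:
  assumes "graph H" "inj_on g (verts H)"
  shows "graph_iso H (map_graph g H) g"
  unfolding graph_iso_def verts_map_graph
proof (intro conjI ballI)
  show "bij_betw g (verts H) (g ` verts H)" using assms(2) by (rule inj_on_imp_bij_betw)
  fix u v assume uv: "u \<in> verts H" "v \<in> verts H"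
  have "g ` e = g ` {u, v} \<longleftrightarrow> e = {u, v}" if e: "e \<in> edges H" for e
  proof -
    obtain a b where "e = {a, b}" "a \<noteq> b" "a \<in> verts H" "b \<in> verts H"
      using assms(1) e by (rule graph_edgeE)
    then have "e \<subseteq> verts H" by blast
    moreover have "{u, v} \<subseteq> verts H" using uv by blast
    ultimately show ?thesis by (rule inj_on_image_eq_iff[OF assms(2)])
  qed
  then have "g ` {u, v} \<in> (`) g ` edges H \<longleftrightarrow> {u, v} \<in> edges H"
    by (metis (no_types, lifting) image_iff)
  then show "adj H u v \<longleftrightarrow> adj (map_graph g H) (g u) (g v)"
    unfolding adj_def edges_map_graph by simp
qed

lemma verts_cart_prod [simp]: "verts (cart_prod A B) = verts A \<times> verts B"
  by (simp add: cart_prod_def verts_def)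

lemma adj_cart_prod:
  "adj (cart_prod A B) (a, b) (a', b') \<longleftrightarrow>
     (a = a' \<and> a \<in> verts A \<and> adj B b b') \<or> (adj A a a' \<and> b = b' \<and> b \<in> verts B)"
proof
  assume "adj (cart_prod A B) (a, b) (a', b')"
  then obtain g h g' h' where e: "{(a, b), (a', b')} = {(g, h), (g', h')}"
    "(g = g' \<and> g \<in> verts A \<and> {h, h'} \<in> edges B) \<or> ({g, g'} \<in> edges A \<and> h = h' \<and> h \<in> verts B)"
    unfolding adj_def cart_prod_def edges_def by auto
  from e(1) have "(a, b) = (g, h) \<and> (a', b') = (g', h') \<or> (a, b) = (g', h') \<and> (a', b') = (g, h)"
    by (auto simp: doubleton_eq_iff)
  with e(2) show "(a = a' \<and> a \<in> verts A \<and> adj B b b') \<or> (adj A a a' \<and> b = b' \<and> b \<in> verts B)"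
    unfolding adj_def by (auto simp: insert_commute)
next
  assume "(a = a' \<and> a \<in> verts A \<and> adj B b b') \<or> (adj A a a' \<and> b = b' \<and> b \<in> verts B)"
  then show "adj (cart_prod A B) (a, b) (a', b')"
    unfolding adj_def cart_prod_def edges_def by auto
qed

lemma graph_iso_cart_prod:
  assumes f: "graph_iso A A' f" and g: "graph_iso B B' g"
  shows "graph_iso (cart_prod A B) (cart_prod A' B') (map_prod f g)"
  unfolding graph_iso_def
proof (intro conjI ballI)
  have bij: "bij_betw f (verts A) (verts A')" "bij_betw g (verts B) (verts B')"
    using f g by (simp_all add: graph_iso_bij_betw)
  then show "bij_betw (map_prod f g) (verts (cart_prod A B)) (verts (cart_prod A' B'))"
    by (simp add: bij_betw_map_prod)
  fix u v assume "u \<in> verts (cart_prod A B)" "v \<in> verts (cart_prod A B)"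
  then obtain a b a' b' where uv: "u = (a, b)" "v = (a', b')"
    and vs: "a \<in> verts A" "a' \<in> verts A" "b \<in> verts B" "b' \<in> verts B" by auto
  have "f a = f a' \<longleftrightarrow> a = a'" "g b = g b' \<longleftrightarrow> b = b'"
    using bij vs by (meson bij_betw_def inj_on_eq_iff)+
  moreover have "adj A' (f a) (f a') \<longleftrightarrow> adj A a a'" "adj B' (g b) (g b') \<longleftrightarrow> adj B b b'"
    using graph_iso_adj[OF f] graph_iso_adj[OF g] vs by simp_all
  moreover have "f a \<in> verts A'" "g b \<in> verts B'"
    using bij vs by (simp_all add: bij_betw_apply)
  ultimately show "adj (cart_prod A B) u v = adj (cart_prod A' B') (map_prod f g u) (map_prod f g v)"
    using vs unfolding uv by (simp add: adj_cart_prod)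
qed

lemma graph_iso_induced_cart_prod:
  assumes "S \<subseteq> verts A" "T \<subseteq> verts B"
  shows "graph_iso (induced (cart_prod A B) (S \<times> T)) (cart_prod (induced A S) (induced B T)) id"
  unfolding graph_iso_def
proof (intro conjI ballI)
  show "bij_betw id (verts (induced (cart_prod A B) (S \<times> T))) (verts (cart_prod (induced A S) (induced B T)))"
    by simp
  fix u v assume "u \<in> verts (induced (cart_prod A B) (S \<times> T))" "v \<in> verts (induced (cart_prod A B) (S \<times> T))"
  then obtain a b a' b' where "u = (a, b)" "v = (a', b')" "a \<in> S" "a' \<in> S" "b \<in> T" "b' \<in> T"
    by auto
  then show "adj (induced (cart_prod A B) (S \<times> T)) u v = adj (cart_prod (induced A S) (induced B T)) (id u) (id v)"
    using assms by (auto simp: adj_induced adj_cart_prod)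
qed

lemma prime_graph_no_proper_factorization:
  fixes H :: "'a graph" and A :: "'b graph" and B :: "'c graph"
  assumes "prime_graph H" "graph A" "graph B" "isomorphic H (cart_prod A B)"
    and "card (verts A) < card (verts H)" "card (verts B) < card (verts H)"
  shows False
proof -
  \<comment> \<open>\<open>prime_graph\<close> only speaks about factors on the vertex type of \<open>H\<close>,
    so copy \<open>A\<close> and \<open>B\<close> there.\<close>
  have fin: "finite (verts H)" using assms(5) card.infinite by fastforce
  obtain g :: "'b \<Rightarrow> 'a" where g: "inj_on g (verts A)"
    using card_le_inj[OF graph_finite_verts[OF assms(2)] fin] less_imp_le[OF assms(5)] by blast
  obtain h :: "'c \<Rightarrow> 'a" where h: "inj_on h (verts B)"
    using card_le_inj[OF graph_finite_verts[OF assms(3)] fin] less_imp_le[OF assms(6)] by blast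
  note A' = graph_map_graph[OF assms(2) g] graph_iso_map_graph[OF assms(2) g]
    and B' = graph_map_graph[OF assms(3) h] graph_iso_map_graph[OF assms(3) h]
  obtain \<phi> where "graph_iso H (cart_prod A B) \<phi>"
    using assms(4) unfolding isomorphic_def by blast
  then have "graph_iso H (cart_prod (map_graph g A) (map_graph h B)) (map_prod g h \<circ> \<phi>)"
    using graph_iso_cart_prod[OF A'(2) B'(2)] by (rule graph_iso_comp)
  then have iso: "isomorphic H (cart_prod (map_graph g A) (map_graph h B))"
    unfolding isomorphic_def by blast
  have "card (verts (map_graph g A)) = card (verts A)"
    "card (verts (map_graph h B)) = card (verts B)"
    using A'(2) B'(2) isomorphic_card_verts unfolding isomorphic_def by metis+
  with assms(5,6) have "\<not> isomorphic (map_graph g A) H" "\<not> isomorphic (map_graph h B) H"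
    using isomorphic_card_verts by fastforce+
  with iso show False
    using assms(1) A'(1) B'(1) unfolding prime_graph_def by blast
qed

definition gdist :: "'a graph \<Rightarrow> 'a \<Rightarrow> 'a \<Rightarrow> nat" where
  "gdist H u v = (LEAST n. (adj H ^^ n) u v)"

lemma gdist_le: "(adj H ^^ n) u v \<Longrightarrow> gdist H u v \<le> n"
  unfolding gdist_def by (rule Least_le)

lemma gdist_self [simp]: "gdist H u u = 0"
  using gdist_le[where n = 0] by simp

lemma relpowp_gdist: "(adj H ^^ n) u v \<Longrightarrow> (adj H ^^ gdist H u v) u v"
  unfolding gdist_def by (rule LeastI)

lemma connected_graph_relpowp_gdist:
  assumes "connected_graph H" "u \<in> verts H" "v \<in> verts H"
  shows "(adj H ^^ gdist H u v) u v"
proof -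
  obtain n where "(adj H ^^ n) u v"
    using assms unfolding connected_graph_def rtranclp_power by blast
  then show ?thesis by (rule relpowp_gdist)
qed

lemma gdist_triangle:
  assumes "connected_graph H" "u \<in> verts H" "v \<in> verts H" "w \<in> verts H"
  shows "gdist H u w \<le> gdist H u v + gdist H v w"
proof -
  have "(adj H ^^ (gdist H u v + gdist H v w)) u w"
    using connected_graph_relpowp_gdist[OF assms(1-3)] connected_graph_relpowp_gdist[OF assms(1,3,4)]
    unfolding relpowp_add by blast
  then show ?thesis by (rule gdist_le)
qed

lemma gdist_eq_0_iff:
  assumes "connected_graph H" "u \<in> verts H" "v \<in> verts H"
  shows "gdist H u v = 0 \<longleftrightarrow> u = v"
proof
  assume "gdist H u v = 0"
  then show "u = v" using connected_graph_relpowp_gdist[OF assms] by simp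
next
  assume "u = v"
  then show "gdist H u v = 0" by simp
qed

lemma gdist_le_1_if_adj: "adj H u v \<Longrightarrow> gdist H u v \<le> 1"
  by (rule gdist_le) (simp only: relpowp_1)

lemma graph_iso_relpowp:
  assumes "graph H" "graph_iso H H' f" "u \<in> verts H"
  shows "(adj H ^^ n) u v \<Longrightarrow> (adj H' ^^ n) (f u) (f v)"
proof (induction n arbitrary: v)
  case 0
  then show ?case by simp
next
  case (Suc n)
  then obtain w where w: "(adj H ^^ n) u w" "adj H w v" by (blast elim: relpowp_Suc_E)
  then have "adj H' (f w) (f v)"
    using graph_adjD[OF assms(1)] graph_iso_adj[OF assms(2)] by blast
  with Suc.IH[OF w(1)] show ?case by (rule relpowp_Suc_I)
qed

lemma graph_iso_gdist:
  assumes "graph H" "graph H'" "graph_iso H H' f" "u \<in> verts H" "v \<in> verts H"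
  shows "gdist H' (f u) (f v) = gdist H u v"
proof -
  let ?g = "inv_into (verts H) f"
  have "?g (f u) = u" "?g (f v) = v" "f u \<in> verts H'"
    using graph_iso_bij_betw[OF assms(3)] assms(4,5)
    by (simp_all add: bij_betw_imp_inj_on bij_betw_apply)
  then have "(adj H' ^^ n) (f u) (f v) \<longleftrightarrow> (adj H ^^ n) u v" for n
    using graph_iso_relpowp[OF assms(1,3,4)]
      graph_iso_relpowp[OF assms(2) graph_iso_inv_into[OF assms(3)], of "f u" n "f v"]
    by auto
  then show ?thesis unfolding gdist_def by simp
qed

definition on_geodesic :: "'a graph \<Rightarrow> 'a \<Rightarrow> 'a \<Rightarrow> 'a \<Rightarrow> bool" where
  "on_geodesic H u v w \<longleftrightarrow> gdist H u w + gdist H w v = gdist H u v"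

lemma automorphism_on_geodesic:
  assumes "graph H" "automorphism H f" "u \<in> verts H" "v \<in> verts H" "w \<in> verts H"
  shows "on_geodesic H (f u) (f v) (f w) \<longleftrightarrow> on_geodesic H u v w"
  using graph_iso_gdist[OF assms(1,1) assms(2)[unfolded automorphism_def]] assms(3-5)
  unfolding on_geodesic_def by simp

lemma dist_threshold_spec:
  assumes "graph H"
  shows "1 \<le> dist_threshold H"
    and "\<And>c. dist_threshold H \<le> card (c ` verts H) \<Longrightarrow> distinguishing H c"
proof -
  let ?Q = "\<lambda>t. 1 \<le> t \<and> (\<forall>k\<ge>t. \<forall>c. coloring_with H c k \<longrightarrow> distinguishing H c)"
  have "?Q (card (verts H) + 1)"
  proof (intro conjI allI impI)
    fix k c assume "card (verts H) + 1 \<le> k" "coloring_with H c k"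
    moreover have "card (c ` verts H) \<le> card (verts H)"
      using graph_finite_verts[OF assms] by (rule card_image_le)
    ultimately show "distinguishing H c" unfolding coloring_with_def by simp
  qed simp
  then have "?Q (dist_threshold H)"
    unfolding dist_threshold_def by (rule LeastI)
  then show "1 \<le> dist_threshold H"
    and "\<And>c. dist_threshold H \<le> card (c ` verts H) \<Longrightarrow> distinguishing H c"
    unfolding coloring_with_def by blast+
qed

lemma dist_threshold_le:
  assumes "1 \<le> t" "\<And>c. t \<le> card (c ` verts H) \<Longrightarrow> distinguishing H c"
  shows "dist_threshold H \<le> t"
  unfolding dist_threshold_def coloring_with_def
  by (rule Least_le) (use assms in blast)

lemma dist_threshold_gt_card_image:
  fixes c :: "'a \<Rightarrow> 'c"
  assumes "graph H" "automorphism H s" "\<forall>v\<in>verts H. c (s v) = c v" "v \<in> verts H" "s v \<noteq> v"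
  shows "card (c ` verts H) < dist_threshold H"
proof -
  obtain g where g: "bij_betw g (c ` verts H) {0..<card (c ` verts H)}"
    using ex_bij_betw_finite_nat graph_finite_verts[OF assms(1)] by blast
  then have "card ((g \<circ> c) ` verts H) = card (c ` verts H)"
    unfolding image_comp[symmetric] by (simp add: bij_betw_def card_image)
  moreover have "\<not> distinguishing H (g \<circ> c)"
    unfolding distinguishing_def using assms(2-5) by auto
  ultimately show ?thesis
    using dist_threshold_spec(2)[OF assms(1)] by (metis not_less)
qed

lemma dist_threshold_minus_1_coloring:
  assumes "graph H" "2 \<le> dist_threshold H"
  obtains c where "card (c ` verts H) = dist_threshold H - 1" "\<not> distinguishing H c"
proof -
  have "\<not> dist_threshold H \<le> dist_threshold H - 1" using assms(2) by simp
  then obtain c where c: "dist_threshold H - 1 \<le> card (c ` verts H)" "\<not> distinguishing H c"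
    using dist_threshold_le[of "dist_threshold H - 1" H] assms(2) by force
  moreover have "card (c ` verts H) < dist_threshold H"
    using c(2) dist_threshold_spec(2)[OF assms(1)] not_less by blast
  ultimately have "card (c ` verts H) = dist_threshold H - 1" by linarith
  with c(2) that show ?thesis by blast
qed

lemma graph_iso_not_distinguishing:
  assumes h: "graph_iso G H h" and c: "\<not> distinguishing H c"
  shows "\<not> distinguishing G (c \<circ> h)" and "card ((c \<circ> h) ` verts G) = card (c ` verts H)"
proof -
  obtain f w where f: "automorphism H f" "\<forall>v\<in>verts H. c (f v) = c v"
    and w: "w \<in> verts H" "f w \<noteq> w"
    using c unfolding distinguishing_def by blast
  let ?h' = "inv_into (verts G) h"
  have bij: "bij_betw h (verts G) (verts H)" "bij_betw f (verts H) (verts H)"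
    using graph_iso_bij_betw[OF h] automorphism_bij_betw[OF f(1)] .
  have h_inv: "h (?h' y) = y" if "y \<in> verts H" for y
    using bij(1) that by (simp add: bij_betw_def f_inv_into_f)
  have "graph_iso G G (?h' \<circ> f \<circ> h)"
    using graph_iso_comp[OF graph_iso_comp[OF h f(1)[unfolded automorphism_def]] graph_iso_inv_into[OF h]]
    by (simp add: comp_assoc)
  moreover have "(c \<circ> h) ((?h' \<circ> f \<circ> h) v) = (c \<circ> h) v" if "v \<in> verts G" for v
    using that f(2) h_inv bij by (simp add: bij_betw_apply)
  moreover have "?h' w \<in> verts G" "(?h' \<circ> f \<circ> h) (?h' w) \<noteq> ?h' w"
  proof -
    show "?h' w \<in> verts G" using bij(1) w(1) by (simp add: bij_betw_def inv_into_into)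
    have "f w \<in> verts H" using bij(2) w(1) by (rule bij_betw_apply)
    have "?h' (f w) \<noteq> ?h' w"
      using w h_inv[OF \<open>f w \<in> verts H\<close>] h_inv[OF w(1)] by metis
    then show "(?h' \<circ> f \<circ> h) (?h' w) \<noteq> ?h' w"
      using h_inv[OF w(1)] by simp
  qed
  ultimately show "\<not> distinguishing G (c \<circ> h)"
    unfolding distinguishing_def automorphism_def by blast
  have "(c \<circ> h) ` verts G = c ` verts H"
    using bij(1) by (metis bij_betw_imp_surj_on image_comp)
  then show "card ((c \<circ> h) ` verts G) = card (c ` verts H)" by simp
qed

lemma dist_threshold_isomorphic:
  assumes "isomorphic G H"
  shows "dist_threshold G = dist_threshold H"
proof -
  obtain h where h: "graph_iso G H h" using assms unfolding isomorphic_def by blast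
  note G_to_H = graph_iso_not_distinguishing[OF h]
    and H_to_G = graph_iso_not_distinguishing[OF graph_iso_inv_into[OF h]]
  have "(\<forall>c. coloring_with G c k \<longrightarrow> distinguishing G c) \<longleftrightarrow>
        (\<forall>c. coloring_with H c k \<longrightarrow> distinguishing H c)" for k
    unfolding coloring_with_def using G_to_H H_to_G by metis
  then show ?thesis unfolding dist_threshold_def by simp
qed

lemma verts_cart_prod_family: "verts (cart_prod_family Gs I) = (\<Pi>\<^sub>E i\<in>I. verts (Gs i))"
  by (simp add: cart_prod_family_def verts_def)

lemma adj_cart_prod_family:
  "adj (cart_prod_family Gs I) x y \<longleftrightarrow>
     x \<in> (\<Pi>\<^sub>E i\<in>I. verts (Gs i)) \<and> y \<in> (\<Pi>\<^sub>E i\<in>I. verts (Gs i)) \<and>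
     (\<exists>i\<in>I. adj (Gs i) (x i) (y i) \<and> (\<forall>j\<in>I. j \<noteq> i \<longrightarrow> x j = y j))"
  (is "?lhs \<longleftrightarrow> ?rhs")
proof
  assume ?lhs
  then obtain x' y' where e: "{x, y} = {x', y'}"
    "x' \<in> (\<Pi>\<^sub>E i\<in>I. verts (Gs i))" "y' \<in> (\<Pi>\<^sub>E i\<in>I. verts (Gs i))"
    "\<exists>i\<in>I. {x' i, y' i} \<in> edges (Gs i) \<and> (\<forall>j\<in>I. j \<noteq> i \<longrightarrow> x' j = y' j)"
    unfolding adj_def cart_prod_family_def edges_def by auto
  from e(1) have "x = x' \<and> y = y' \<or> x = y' \<and> y = x'" by (auto simp: doubleton_eq_iff)
  with e(2-4) show ?rhs unfolding adj_def by (auto simp: insert_commute)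
next
  assume ?rhs
  then show ?lhs unfolding adj_def cart_prod_family_def edges_def by auto
qed

lemma fun_upd_undefined_in_PiE_Diff: "x \<in> Pi\<^sub>E I A \<Longrightarrow> j \<in> I \<Longrightarrow> x(j := undefined) \<in> Pi\<^sub>E (I - {j}) A"
  by (intro fun_upd_in_PiE) (auto simp: insert_absorb)

text \<open>In the extensional encoding of \<open>Pi\<^sub>E\<close>, \<open>x(j := undefined)\<close> is the restriction of \<open>x\<close>
  to \<open>I - {j}\<close>.\<close>

lemma bij_betw_PiE_split:
  assumes j: "j \<in> I"
  shows "bij_betw (\<lambda>x. (x j, x(j := undefined))) (Pi\<^sub>E I A) (A j \<times> Pi\<^sub>E (I - {j}) A)"
proof (rule bij_betw_byWitness[where f' = "\<lambda>(a, y). y(j := a)"])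
  show "\<forall>x\<in>Pi\<^sub>E I A. (\<lambda>(a, y). y(j := a)) (x j, x(j := undefined)) = x" by simp
  have "y j = undefined" if "y \<in> Pi\<^sub>E (I - {j}) A" for y
    using PiE_arb[OF that] by simp
  then show "\<forall>p\<in>A j \<times> Pi\<^sub>E (I - {j}) A. (\<lambda>x. (x j, x(j := undefined))) ((\<lambda>(a, y). y(j := a)) p) = p"
    by (auto simp: fun_upd_idem)
  show "(\<lambda>x. (x j, x(j := undefined))) ` Pi\<^sub>E I A \<subseteq> A j \<times> Pi\<^sub>E (I - {j}) A"
    using PiE_mem[OF _ j] fun_upd_undefined_in_PiE_Diff[OF _ j] by blast
  have "y(j := a) \<in> Pi\<^sub>E I A" if "a \<in> A j" "y \<in> Pi\<^sub>E (I - {j}) A" for a y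
    using PiE_fun_upd[OF that] j by (simp add: insert_absorb)
  then show "(\<lambda>(a, y). y(j := a)) ` (A j \<times> Pi\<^sub>E (I - {j}) A) \<subseteq> Pi\<^sub>E I A" by auto
qed

lemma bex_coordinate_split:
  assumes "j \<in> I"
  shows "(\<exists>m\<in>I. P m \<and> (\<forall>l\<in>I. l \<noteq> m \<longrightarrow> Q l)) \<longleftrightarrow>
    Q j \<and> (\<exists>m\<in>I - {j}. P m \<and> (\<forall>l\<in>I - {j}. l \<noteq> m \<longrightarrow> Q l)) \<or> P j \<and> (\<forall>l\<in>I. l \<noteq> j \<longrightarrow> Q l)"
proof
  assume "\<exists>m\<in>I. P m \<and> (\<forall>l\<in>I. l \<noteq> m \<longrightarrow> Q l)"
  then obtain m where "m \<in> I" "P m" "\<forall>l\<in>I. l \<noteq> m \<longrightarrow> Q l" by blast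
  then show "Q j \<and> (\<exists>m\<in>I - {j}. P m \<and> (\<forall>l\<in>I - {j}. l \<noteq> m \<longrightarrow> Q l)) \<or> P j \<and> (\<forall>l\<in>I. l \<noteq> j \<longrightarrow> Q l)"
    using assms by (cases "m = j") auto
qed (use assms in auto)

lemma graph_iso_cart_prod_family_split:
  assumes j: "j \<in> I"
  shows "graph_iso (cart_prod_family Gs I) (cart_prod (Gs j) (cart_prod_family Gs (I - {j})))
           (\<lambda>x. (x j, x(j := undefined)))"
  unfolding graph_iso_def verts_cart_prod_family verts_cart_prod
proof (intro conjI ballI)
  show "bij_betw (\<lambda>x. (x j, x(j := undefined))) (\<Pi>\<^sub>E i\<in>I. verts (Gs i))
      (verts (Gs j) \<times> (\<Pi>\<^sub>E i\<in>I - {j}. verts (Gs i)))"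
    by (rule bij_betw_PiE_split[OF j])
  fix x y assume xy: "x \<in> (\<Pi>\<^sub>E i\<in>I. verts (Gs i))" "y \<in> (\<Pi>\<^sub>E i\<in>I. verts (Gs i))"
  have rest: "x(j := undefined) \<in> (\<Pi>\<^sub>E i\<in>I - {j}. verts (Gs i))"
      "y(j := undefined) \<in> (\<Pi>\<^sub>E i\<in>I - {j}. verts (Gs i))"
    using fun_upd_undefined_in_PiE_Diff[OF xy(1) j] fun_upd_undefined_in_PiE_Diff[OF xy(2) j] .
  have "x l = y l" if "l \<notin> I" for l
    using PiE_arb[OF xy(1) that] PiE_arb[OF xy(2) that] by simp
  then have rest_eq: "x(j := undefined) = y(j := undefined) \<longleftrightarrow> (\<forall>l\<in>I. l \<noteq> j \<longrightarrow> x l = y l)"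
    by (auto simp: fun_eq_iff)
  have adj_rest: "adj (cart_prod_family Gs (I - {j})) (x(j := undefined)) (y(j := undefined)) \<longleftrightarrow>
      (\<exists>m\<in>I - {j}. adj (Gs m) (x m) (y m) \<and> (\<forall>l\<in>I - {j}. l \<noteq> m \<longrightarrow> x l = y l))"
    unfolding adj_cart_prod_family using rest by auto
  show "adj (cart_prod_family Gs I) x y \<longleftrightarrow>
      adj (cart_prod (Gs j) (cart_prod_family Gs (I - {j}))) (x j, x(j := undefined)) (y j, y(j := undefined))"
    unfolding adj_cart_prod rest_eq adj_rest verts_cart_prod_family adj_cart_prod_family[of Gs I]
    using bex_coordinate_split[OF j, of "\<lambda>m. adj (Gs m) (x m) (y m)" "\<lambda>l. x l = y l"]
      xy rest(1) PiE_mem[OF xy(1) j] by simp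
qed

lemma card_PiE_fibre:
  assumes "l \<in> I" "b \<in> A l"
  shows "card {x \<in> Pi\<^sub>E I A. x l = b} = card (Pi\<^sub>E (I - {l}) A)"
proof (rule bij_betw_same_card[of "\<lambda>x. x(l := undefined)"])
  show "bij_betw (\<lambda>x. x(l := undefined)) {x \<in> Pi\<^sub>E I A. x l = b} (Pi\<^sub>E (I - {l}) A)"
  proof (rule bij_betw_byWitness[where f' = "\<lambda>y. y(l := b)"])
    show "\<forall>x\<in>{x \<in> Pi\<^sub>E I A. x l = b}. (x(l := undefined))(l := b) = x" by auto
    have "y l = undefined" if "y \<in> Pi\<^sub>E (I - {l}) A" for y using PiE_arb[OF that] by simp
    then show "\<forall>y\<in>Pi\<^sub>E (I - {l}) A. (y(l := b))(l := undefined) = y" by (auto intro: fun_upd_idem)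
    show "(\<lambda>x. x(l := undefined)) ` {x \<in> Pi\<^sub>E I A. x l = b} \<subseteq> Pi\<^sub>E (I - {l}) A"
      using fun_upd_undefined_in_PiE_Diff[OF _ assms(1)] by blast
    have "y(l := b) \<in> Pi\<^sub>E I A" if "y \<in> Pi\<^sub>E (I - {l}) A" for y
      using PiE_fun_upd[OF assms(2) that] assms(1) by (simp add: insert_absorb)
    then show "(\<lambda>y. y(l := b)) ` Pi\<^sub>E (I - {l}) A \<subseteq> {x \<in> Pi\<^sub>E I A. x l = b}" by auto
  qed
qed

lemma image_PiE_coordinate_split:
  assumes "l \<in> I"
  shows "(\<lambda>x. (c (x l), x(l := undefined))) ` Pi\<^sub>E I A = c ` A l \<times> Pi\<^sub>E (I - {l}) A"
proof -
  have "(\<lambda>x. (c (x l), x(l := undefined))) ` Pi\<^sub>E I A =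
      map_prod c id ` ((\<lambda>x. (x l, x(l := undefined))) ` Pi\<^sub>E I A)"
    by (simp add: image_image)
  also have "\<dots> = map_prod c id ` (A l \<times> Pi\<^sub>E (I - {l}) A)"
    unfolding bij_betw_imp_surj_on[OF bij_betw_PiE_split[OF assms, of A]] ..
  also have "\<dots> = c ` A l \<times> Pi\<^sub>E (I - {l}) A" by (rule map_prod_surj_on) simp_all
  finally show ?thesis .
qed

locale connected_product =
  fixes Gs :: "nat \<Rightarrow> 'a graph" and I :: "nat set"
  assumes finite_index: "finite I"
    and graph_factor: "i \<in> I \<Longrightarrow> graph (Gs i)"
    and connected_factor: "i \<in> I \<Longrightarrow> connected_graph (Gs i)"
begin

abbreviation PG :: "(nat \<Rightarrow> 'a) graph" where
  "PG \<equiv> cart_prod_family Gs I"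

abbreviation PV :: "(nat \<Rightarrow> 'a) set" where
  "PV \<equiv> \<Pi>\<^sub>E i\<in>I. verts (Gs i)"

lemma fun_upd_in_PV: "x \<in> PV \<Longrightarrow> i \<in> I \<Longrightarrow> a \<in> verts (Gs i) \<Longrightarrow> x(i := a) \<in> PV"
  by (auto simp: PiE_iff extensional_def)

lemma graph_PG: "graph PG"
  unfolding graph_def
proof (intro conjI ballI)
  show "finite (verts PG)"
    unfolding verts_cart_prod_family
    using finite_index graph_factor by (auto simp: graph_def intro!: finite_PiE)
  fix e assume "e \<in> edges PG"
  then obtain x y i where e: "e = {x, y}" "x \<in> PV" "y \<in> PV" "i \<in> I" "adj (Gs i) (x i) (y i)"
    unfolding cart_prod_family_def edges_def adj_def by auto
  then have "x \<noteq> y" using graph_adjD graph_factor by metis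
  with e show "\<exists>u v. e = {u, v} \<and> u \<noteq> v \<and> u \<in> verts PG \<and> v \<in> verts PG"
    unfolding verts_cart_prod_family by blast
qed

lemma relpowp_fun_upd:
  assumes "x \<in> PV" "i \<in> I"
  shows "(adj (Gs i) ^^ n) (x i) b \<Longrightarrow> (adj PG ^^ n) x (x(i := b))"
proof (induction n arbitrary: b)
  case 0
  then show ?case by (auto simp: fun_eq_iff)
next
  case (Suc n)
  then obtain c where c: "(adj (Gs i) ^^ n) (x i) c" "adj (Gs i) c b" by (blast elim: relpowp_Suc_E)
  have "c \<in> verts (Gs i)" "b \<in> verts (Gs i)"
    using graph_adjD[OF graph_factor[OF assms(2)] c(2)] by simp_all
  then have "adj PG (x(i := c)) (x(i := b))"
    unfolding adj_cart_prod_family using fun_upd_in_PV assms c(2) by auto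
  with Suc.IH[OF c(1)] show ?case by (rule relpowp_Suc_I[where P = "adj PG"])
qed

lemma sum_gdist_le:
  assumes "x \<in> PV"
  shows "(adj PG ^^ n) x y \<Longrightarrow> (\<Sum>i\<in>I. gdist (Gs i) (x i) (y i)) \<le> n"
proof (induction n arbitrary: y)
  case 0
  then show ?case by simp
next
  case (Suc n)
  then obtain z where z: "(adj PG ^^ n) x z" "adj PG z y" by (blast elim: relpowp_Suc_E)
  then obtain i where i: "i \<in> I" "adj (Gs i) (z i) (y i)" "\<forall>j\<in>I. j \<noteq> i \<longrightarrow> z j = y j"
    and zy: "z \<in> PV" "y \<in> PV"
    unfolding adj_cart_prod_family by blast
  have "gdist (Gs j) (x j) (y j) \<le> gdist (Gs j) (x j) (z j) + (if j = i then 1 else 0)"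
    if "j \<in> I" for j
  proof -
    have "gdist (Gs j) (x j) (y j) \<le> gdist (Gs j) (x j) (z j) + gdist (Gs j) (z j) (y j)"
      using that assms zy by (intro gdist_triangle connected_factor) (auto simp: PiE_mem)
    moreover have "gdist (Gs j) (z j) (y j) \<le> (if j = i then 1 else 0)"
      using i that gdist_le_1_if_adj[OF i(2)] by auto
    ultimately show ?thesis by linarith
  qed
  then have "(\<Sum>j\<in>I. gdist (Gs j) (x j) (y j))
      \<le> (\<Sum>j\<in>I. gdist (Gs j) (x j) (z j)) + (\<Sum>j\<in>I. if j = i then 1 else 0)"
    unfolding sum.distrib[symmetric] by (rule sum_mono)
  also have "\<dots> \<le> Suc n" using Suc.IH[OF z(1)] i(1) finite_index by simp
  finally show ?case .
qed

lemma relpowp_sum_gdist: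
  assumes "x \<in> PV" "y \<in> PV"
  shows "(adj PG ^^ (\<Sum>i\<in>I. gdist (Gs i) (x i) (y i))) x y"
proof -
  have "(adj PG ^^ (\<Sum>i\<in>J. gdist (Gs i) (x i) (y i))) x (\<lambda>i. if i \<in> J then y i else x i)"
    if "J \<subseteq> I" for J
    using finite_subset[OF that finite_index] that
  proof (induction J rule: finite_induct)
    case empty
    then show ?case by simp
  next
    case (insert j J)
    let ?z = "\<lambda>i. if i \<in> J then y i else x i"
    have j: "j \<in> I" and z: "?z \<in> PV" and zj: "?z j = x j"
      using insert assms by (auto simp: PiE_iff extensional_def)
    have "(adj (Gs j) ^^ gdist (Gs j) (x j) (y j)) (?z j) (y j)"
      unfolding zj using assms j by (intro connected_graph_relpowp_gdist connected_factor) (auto simp: PiE_mem)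
    then have "(adj PG ^^ gdist (Gs j) (x j) (y j)) ?z (?z(j := y j))"
      by (rule relpowp_fun_upd[OF z j])
    moreover have "?z(j := y j) = (\<lambda>i. if i \<in> insert j J then y i else x i)" by auto
    ultimately have step: "(adj PG ^^ gdist (Gs j) (x j) (y j)) ?z (\<lambda>i. if i \<in> insert j J then y i else x i)"
      by simp
    have "(adj PG ^^ (\<Sum>i\<in>J. gdist (Gs i) (x i) (y i))) x ?z"
      using insert.IH insert.prems by blast
    from relpowp_trans[OF this step] show ?case
      using insert(1,2) by (simp add: add.commute)
  qed
  moreover have "(\<lambda>i. if i \<in> I then y i else x i) = y"
    using assms by (auto simp: PiE_iff extensional_def)
  ultimately show ?thesis by fastforce
qed

lemma gdist_PG:
  assumes "x \<in> PV" "y \<in> PV"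
  shows "gdist PG x y = (\<Sum>i\<in>I. gdist (Gs i) (x i) (y i))"
  using gdist_le[OF relpowp_sum_gdist[OF assms]] sum_gdist_le[OF assms(1) relpowp_gdist[OF relpowp_sum_gdist[OF assms]]]
  by simp

lemma PV_nonempty: "PV \<noteq> {}"
  using connected_factor unfolding connected_graph_def by (auto simp: PiE_eq_empty_iff)

lemma on_geodesic_PG_iff:
  assumes "u \<in> PV" "v \<in> PV" "w \<in> PV"
  shows "on_geodesic PG u v w \<longleftrightarrow> (\<forall>i\<in>I. on_geodesic (Gs i) (u i) (v i) (w i))"
proof
  assume "on_geodesic PG u v w"
  then have sum_eq: "(\<Sum>i\<in>I. gdist (Gs i) (u i) (v i)) =
      (\<Sum>i\<in>I. gdist (Gs i) (u i) (w i) + gdist (Gs i) (w i) (v i))"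
    unfolding on_geodesic_def using assms by (simp add: gdist_PG sum.distrib)
  have triangle: "gdist (Gs i) (u i) (v i) \<le> gdist (Gs i) (u i) (w i) + gdist (Gs i) (w i) (v i)"
    if "i \<in> I" for i
    using connected_factor[OF that] PiE_mem[OF assms(1) that] PiE_mem[OF assms(3) that]
      PiE_mem[OF assms(2) that] by (rule gdist_triangle)
  show "\<forall>i\<in>I. on_geodesic (Gs i) (u i) (v i) (w i)"
    unfolding on_geodesic_def using sum_mono_inv[OF sum_eq triangle _ finite_index] by simp
next
  assume "\<forall>i\<in>I. on_geodesic (Gs i) (u i) (v i) (w i)"
  then have "(\<Sum>i\<in>I. gdist (Gs i) (u i) (w i) + gdist (Gs i) (w i) (v i)) =
      (\<Sum>i\<in>I. gdist (Gs i) (u i) (v i))"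
    unfolding on_geodesic_def by simp
  then show "on_geodesic PG u v w"
    unfolding on_geodesic_def using assms by (simp add: gdist_PG sum.distrib)
qed

lemma on_geodesic_fun_upd:
  assumes "u \<in> PV" "v \<in> PV" "j \<in> I"
  shows "on_geodesic PG u v (v(j := u j))"
proof -
  have w: "v(j := u j) \<in> PV" using fun_upd_in_PV[OF assms(2,3) PiE_mem[OF assms(1,3)]] .
  show ?thesis
    unfolding on_geodesic_PG_iff[OF assms(1,2) w] unfolding on_geodesic_def by simp
qed

definition layer :: "(nat \<Rightarrow> 'a) \<Rightarrow> nat \<Rightarrow> (nat \<Rightarrow> 'a) set" where
  "layer x i = (\<lambda>a. x(i := a)) ` verts (Gs i)"

lemma mem_layer_iff:
  assumes "x \<in> PV" "i \<in> I"
  shows "w \<in> layer x i \<longleftrightarrow> w \<in> PV \<and> (\<forall>l\<in>I. l \<noteq> i \<longrightarrow> w l = x l)"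
proof
  assume "w \<in> layer x i"
  then obtain a where "a \<in> verts (Gs i)" "w = x(i := a)" unfolding layer_def by blast
  then show "w \<in> PV \<and> (\<forall>l\<in>I. l \<noteq> i \<longrightarrow> w l = x l)" using fun_upd_in_PV assms by simp
next
  assume w: "w \<in> PV \<and> (\<forall>l\<in>I. l \<noteq> i \<longrightarrow> w l = x l)"
  have "x(i := w i) \<in> PV" using fun_upd_in_PV[OF assms PiE_mem[OF conjunct1[OF w] assms(2)]] .
  then have "w = x(i := w i)" using w by (intro PiE_ext) auto
  then show "w \<in> layer x i" unfolding layer_def using PiE_mem[OF conjunct1[OF w] assms(2)] by blast
qed

lemma layer_subset_PV: "x \<in> PV \<Longrightarrow> i \<in> I \<Longrightarrow> layer x i \<subseteq> PV"
  by (auto simp: mem_layer_iff)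

lemma self_mem_layer: "x \<in> PV \<Longrightarrow> i \<in> I \<Longrightarrow> x \<in> layer x i"
  by (simp add: mem_layer_iff)

lemma graph_iso_layer:
  assumes "x \<in> PV" "i \<in> I"
  shows "graph_iso (Gs i) (induced PG (layer x i)) (\<lambda>a. x(i := a))"
  unfolding graph_iso_def verts_induced
proof (intro conjI ballI)
  have "inj (\<lambda>a. x(i := a))" by (rule injI) (metis fun_upd_same)
  then show "bij_betw (\<lambda>a. x(i := a)) (verts (Gs i)) (layer x i)"
    unfolding layer_def by (simp add: bij_betw_imageI inj_on_subset)
  fix a b assume ab: "a \<in> verts (Gs i)" "b \<in> verts (Gs i)"
  then have in_layer: "x(i := a) \<in> layer x i" "x(i := b) \<in> layer x i" unfolding layer_def by blast+
  have "(\<exists>m\<in>I. adj (Gs m) ((x(i := a)) m) ((x(i := b)) m) \<and>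
      (\<forall>l\<in>I. l \<noteq> m \<longrightarrow> (x(i := a)) l = (x(i := b)) l)) \<longleftrightarrow> adj (Gs i) a b"
  proof
    assume "\<exists>m\<in>I. adj (Gs m) ((x(i := a)) m) ((x(i := b)) m) \<and>
      (\<forall>l\<in>I. l \<noteq> m \<longrightarrow> (x(i := a)) l = (x(i := b)) l)"
    then obtain m where m: "m \<in> I" "adj (Gs m) ((x(i := a)) m) ((x(i := b)) m)" by blast
    have "m = i"
    proof (rule ccontr)
      assume "m \<noteq> i"
      then have "adj (Gs m) (x m) (x m)" using m(2) by simp
      then show False using graph_adjD[OF graph_factor[OF m(1)]] by blast
    qed
    then show "adj (Gs i) a b" using m(2) by simp
  qed (use assms(2) in auto)
  then show "adj (Gs i) a b \<longleftrightarrow> adj (induced PG (layer x i)) (x(i := a)) (x(i := b))"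
    unfolding adj_induced adj_cart_prod_family
    using in_layer layer_subset_PV[OF assms] by blast
qed

lemma on_geodesic_layer:
  assumes "x \<in> PV" "i \<in> I" "a \<in> verts (Gs i)" "b \<in> verts (Gs i)" "w \<in> PV"
    and "on_geodesic PG (x(i := a)) (x(i := b)) w"
  shows "w \<in> layer x i"
proof -
  have "w l = x l" if "l \<in> I" "l \<noteq> i" for l
  proof -
    have "on_geodesic (Gs l) ((x(i := a)) l) ((x(i := b)) l) (w l)"
      using assms(6) that(1)
      unfolding on_geodesic_PG_iff[OF fun_upd_in_PV[OF assms(1-3)] fun_upd_in_PV[OF assms(1,2,4)] assms(5)]
      by blast
    then have "gdist (Gs l) (x l) (w l) = 0" using that(2) unfolding on_geodesic_def by simp
    then show ?thesis
      using gdist_eq_0_iff[OF connected_factor[OF that(1)] PiE_mem[OF assms(1) that(1)] PiE_mem[OF assms(5) that(1)]]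
      by simp
  qed
  then show ?thesis using mem_layer_iff[OF assms(1,2)] assms(5) by blast
qed

lemma finite_PV: "finite PV"
  using graph_finite_verts[OF graph_PG] by (simp add: verts_cart_prod_family)

lemma automorphism_PG_bij_betw: "automorphism PG f \<Longrightarrow> bij_betw f PV PV"
  using automorphism_bij_betw[of PG f] by (simp add: verts_cart_prod_family)

definition exchange_closed :: "(nat \<Rightarrow> 'a) set \<Rightarrow> bool" where
  "exchange_closed S \<longleftrightarrow> (\<forall>j\<in>I. \<forall>u\<in>S. \<forall>v\<in>S. v(j := u j) \<in> S)"

lemma exchange_closedD: "exchange_closed S \<Longrightarrow> j \<in> I \<Longrightarrow> u \<in> S \<Longrightarrow> v \<in> S \<Longrightarrow> v(j := u j) \<in> S"
  unfolding exchange_closed_def by blast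

lemma exchange_closed_image_layer:
  assumes f: "automorphism PG f" and x: "x \<in> PV" and i: "i \<in> I"
  shows "exchange_closed (f ` layer x i)"
  unfolding exchange_closed_def
proof (intro ballI)
  fix j u v assume j: "j \<in> I" and u: "u \<in> f ` layer x i" and v: "v \<in> f ` layer x i"
  obtain a b where ab: "a \<in> verts (Gs i)" "b \<in> verts (Gs i)" "u = f (x(i := a))" "v = f (x(i := b))"
    using u v unfolding layer_def by blast
  have bij: "bij_betw f PV PV" by (rule automorphism_PG_bij_betw[OF f])
  have xa: "x(i := a) \<in> PV" and xb: "x(i := b) \<in> PV"
    using fun_upd_in_PV[OF x i ab(1)] fun_upd_in_PV[OF x i ab(2)] .
  have uv: "u \<in> PV" "v \<in> PV"
    unfolding ab(3,4) using bij_betw_apply[OF bij xa] bij_betw_apply[OF bij xb] .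
  have "v(j := u j) \<in> PV" using fun_upd_in_PV[OF uv(2) j PiE_mem[OF uv(1) j]] .
  then have "v(j := u j) \<in> f ` PV" unfolding bij_betw_imp_surj_on[OF bij] .
  then obtain w where w: "v(j := u j) = f w" "w \<in> PV" by (rule imageE)
  have "on_geodesic PG u v (f w)"
    using on_geodesic_fun_upd[OF uv j] unfolding w(1) .
  then have "on_geodesic PG (f (x(i := a))) (f (x(i := b))) (f w)"
    unfolding ab(3,4) .
  then have "on_geodesic PG (x(i := a)) (x(i := b)) w"
    using automorphism_on_geodesic[OF graph_PG f, unfolded verts_cart_prod_family, OF xa xb w(2)] by simp
  then have "w \<in> layer x i" by (rule on_geodesic_layer[OF x i ab(1,2) w(2)])
  then show "v(j := u j) \<in> f ` layer x i" unfolding w(1) by (rule imageI)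
qed

lemma graph_iso_induced_split:
  assumes S: "S \<subseteq> PV" and closed: "exchange_closed S" and j: "j \<in> I"
  defines "A \<equiv> (\<lambda>x. x j) ` S" and "B \<equiv> (\<lambda>x. x(j := undefined)) ` S"
  shows "isomorphic (induced PG S) (cart_prod (induced (Gs j) A) (induced (cart_prod_family Gs (I - {j})) B))"
    and "card S = card A * card B"
proof -
  let ?h = "\<lambda>x. (x j, x(j := undefined))"
  have box: "?h ` S = A \<times> B"
  proof
    show "?h ` S \<subseteq> A \<times> B" unfolding A_def B_def by auto
    show "A \<times> B \<subseteq> ?h ` S"
    proof
      fix p assume "p \<in> A \<times> B"
      then obtain u v where uv: "u \<in> S" "v \<in> S" and p: "p = (u j, v(j := undefined))"
        unfolding A_def B_def by blast
      have "p = ?h (v(j := u j))" unfolding p by simp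
      then show "p \<in> ?h ` S" using exchange_closedD[OF closed j uv] by (rule image_eqI)
    qed
  qed
  note split = graph_iso_cart_prod_family_split[OF j]
  have "S \<subseteq> verts PG" using S by (simp only: verts_cart_prod_family)
  from graph_iso_induced[OF split this]
  have iso: "graph_iso (induced PG S) (induced (cart_prod (Gs j) (cart_prod_family Gs (I - {j}))) (A \<times> B)) ?h"
    unfolding box .
  have "A \<subseteq> verts (Gs j)"
    unfolding A_def by (rule image_subsetI) (rule PiE_mem[OF subsetD[OF S] j])
  moreover have "B \<subseteq> verts (cart_prod_family Gs (I - {j}))"
    unfolding B_def verts_cart_prod_family
    by (rule image_subsetI) (rule fun_upd_undefined_in_PiE_Diff[OF subsetD[OF S] j])
  ultimately have "graph_iso (induced PG S)
      (cart_prod (induced (Gs j) A) (induced (cart_prod_family Gs (I - {j})) B)) (id \<circ> ?h)"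
    by (rule graph_iso_comp[OF iso graph_iso_induced_cart_prod])
  then show "isomorphic (induced PG S) (cart_prod (induced (Gs j) A) (induced (cart_prod_family Gs (I - {j})) B))"
    unfolding isomorphic_def by blast
  have "bij_betw ?h S (A \<times> B)" using graph_iso_bij_betw[OF iso] by simp
  then show "card S = card A * card B" by (simp add: bij_betw_same_card card_cartesian_product)
qed

lemma graph_iso_image_layer:
  assumes f: "automorphism PG f" and x: "x \<in> PV" and i: "i \<in> I"
  shows "graph_iso (induced PG (layer x i)) (induced PG (f ` layer x i)) f"
proof -
  have "layer x i \<subseteq> verts PG"
    using layer_subset_PV[OF x i] by (simp only: verts_cart_prod_family)
  then show ?thesis by (rule graph_iso_induced[OF f[unfolded automorphism_def]])
qed

lemma isomorphic_factor_image_layer: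
  assumes f: "automorphism PG f" and x: "x \<in> PV" and i: "i \<in> I"
  shows "isomorphic (Gs i) (induced PG (f ` layer x i))"
  using graph_iso_comp[OF graph_iso_layer[OF x i] graph_iso_image_layer[OF f x i]]
  unfolding isomorphic_def by blast

lemma automorphism_fun_upd_factor:
  assumes s: "automorphism (Gs l) s" and l: "l \<in> I"
  shows "automorphism PG (\<lambda>x. x(l := s (x l)))"
proof -
  let ?S = "\<lambda>x. x(l := s (x l))"
  have s_bij: "bij_betw s (verts (Gs l)) (verts (Gs l))" by (rule automorphism_bij_betw[OF s])
  have s_eq: "s a = s b \<longleftrightarrow> a = b" if "a \<in> verts (Gs l)" "b \<in> verts (Gs l)" for a b
    using s_bij that by (meson bij_betw_def inj_on_eq_iff)
  have s_adj: "adj (Gs l) (s a) (s b) \<longleftrightarrow> adj (Gs l) a b" if "a \<in> verts (Gs l)" "b \<in> verts (Gs l)" for a b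
    using graph_iso_adj[OF s[unfolded automorphism_def] that] .
  have S_PV: "?S x \<in> PV" if "x \<in> PV" for x
    using fun_upd_in_PV[OF that l bij_betw_apply[OF s_bij PiE_mem[OF that l]]] .
  have "inj_on ?S PV"
  proof (rule inj_onI)
    fix x y assume xy: "x \<in> PV" "y \<in> PV" "?S x = ?S y"
    have "s (x l) = s (y l)" using fun_cong[OF xy(3), of l] by simp
    then have "x l = y l" using s_eq PiE_mem[OF xy(1) l] PiE_mem[OF xy(2) l] by blast
    moreover have "x m = y m" if "m \<noteq> l" for m using fun_cong[OF xy(3), of m] that by simp
    ultimately show "x = y" by (metis ext)
  qed
  moreover have "?S ` PV \<subseteq> PV" using S_PV by blast
  ultimately have bij: "bij_betw ?S PV PV"
    using endo_inj_surj[OF graph_finite_verts[OF graph_PG, unfolded verts_cart_prod_family]]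
    by (simp add: bij_betw_def)
  have "adj PG x y \<longleftrightarrow> adj PG (?S x) (?S y)" if xy: "x \<in> PV" "y \<in> PV" for x y
  proof -
    have A: "adj (Gs m) (?S x m) (?S y m) \<longleftrightarrow> adj (Gs m) (x m) (y m)" if "m \<in> I" for m
      using s_adj PiE_mem[OF xy(1) l] PiE_mem[OF xy(2) l] by simp
    have E: "?S x m = ?S y m \<longleftrightarrow> x m = y m" if "m \<in> I" for m
      using s_eq PiE_mem[OF xy(1) l] PiE_mem[OF xy(2) l] by simp
    have "(\<exists>i\<in>I. adj (Gs i) (?S x i) (?S y i) \<and> (\<forall>j\<in>I. j \<noteq> i \<longrightarrow> ?S x j = ?S y j)) \<longleftrightarrow>
        (\<exists>i\<in>I. adj (Gs i) (x i) (y i) \<and> (\<forall>j\<in>I. j \<noteq> i \<longrightarrow> x j = y j))"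
      using A E by meson
    then show ?thesis unfolding adj_cart_prod_family using xy S_PV by simp
  qed
  with bij show ?thesis
    unfolding automorphism_def graph_iso_def verts_cart_prod_family by blast
qed

lemma automorphism_image_fibre:
  assumes f: "automorphism PG f" and l: "l \<in> I"
    and \<sigma>: "automorphism (Gs l) \<sigma>" "\<And>x. x \<in> PV \<Longrightarrow> f x l = \<sigma> (x l)"
    and b: "b \<in> verts (Gs l)"
  shows "f ` {x \<in> PV. x l = b} = {x \<in> PV. x l = \<sigma> b}"
proof (rule card_subset_eq)
  have bij: "bij_betw f PV PV" by (rule automorphism_PG_bij_betw[OF f])
  show "finite {x \<in> PV. x l = \<sigma> b}" using finite_PV by simp
  show "f ` {x \<in> PV. x l = b} \<subseteq> {x \<in> PV. x l = \<sigma> b}"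
    using bij_betw_apply[OF bij] \<sigma>(2) by auto
  have "inj_on f {x \<in> PV. x l = b}"
    using bij_betw_imp_inj_on[OF bij] by (rule inj_on_subset) blast
  moreover have "\<sigma> b \<in> verts (Gs l)"
    using bij_betw_apply[OF automorphism_bij_betw[OF \<sigma>(1)] b] .
  ultimately show "card (f ` {x \<in> PV. x l = b}) = card {x \<in> PV. x l = \<sigma> b}"
    using card_PiE_fibre[where A = "\<lambda>i. verts (Gs i)", OF l b]
      card_PiE_fibre[where A = "\<lambda>i. verts (Gs i)", OF l] by (simp add: card_image)
qed

lemma card_invariant_colours_le:
  fixes C :: "(nat \<Rightarrow> 'a) \<Rightarrow> nat"
  assumes f: "automorphism PG f" and C: "\<And>x. x \<in> PV \<Longrightarrow> C (f x) = C x" and l: "l \<in> I"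
    and \<sigma>: "automorphism (Gs l) \<sigma>" "\<And>x. x \<in> PV \<Longrightarrow> f x l = \<sigma> (x l)"
    and moved: "a \<in> verts (Gs l)" "\<sigma> a \<noteq> a"
  shows "card (C ` PV) \<le> (dist_threshold (Gs l) - 1) * card (\<Pi>\<^sub>E i\<in>I - {l}. verts (Gs i))"
proof -
  define Q where "Q = card (\<Pi>\<^sub>E i\<in>I - {l}. verts (Gs i))"
  define c where "c b = C ` {x \<in> PV. x l = b}" for b
  have "c (\<sigma> b) = c b" if "b \<in> verts (Gs l)" for b
  proof -
    have "c (\<sigma> b) = C ` f ` {x \<in> PV. x l = b}"
      unfolding c_def using automorphism_image_fibre[OF f l \<sigma> that] by simp
    also have "\<dots> = c b" unfolding c_def image_image by (rule image_cong) (simp_all add: C)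
    finally show ?thesis .
  qed
  then have "card (c ` verts (Gs l)) < dist_threshold (Gs l)"
    using dist_threshold_gt_card_image[OF graph_factor[OF l] \<sigma>(1) _ moved] by blast
  then have card_c: "card (c ` verts (Gs l)) \<le> dist_threshold (Gs l) - 1" by simp
  have "C ` PV = \<Union> (c ` verts (Gs l))"
    unfolding c_def using PiE_mem[OF _ l] by blast
  then have "card (C ` PV) \<le> sum card (c ` verts (Gs l))"
    using card_Union_le_sum_card by simp
  also have "\<dots> \<le> card (c ` verts (Gs l)) * Q"
  proof (rule sum_bounded_above[where K = Q, simplified])
    fix X assume "X \<in> c ` verts (Gs l)"
    then obtain b where "b \<in> verts (Gs l)" "X = C ` {x \<in> PV. x l = b}" unfolding c_def by blast
    then show "card X \<le> Q"
      using card_image_le[of "{x \<in> PV. x l = b}" C] finite_PV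
        card_PiE_fibre[where A = "\<lambda>i. verts (Gs i)", OF l] unfolding Q_def by simp
  qed
  also have "\<dots> \<le> (dist_threshold (Gs l) - 1) * Q" using card_c by (rule mult_le_mono1)
  finally show ?thesis unfolding Q_def .
qed

lemma factor_bound_less_dist_threshold:
  assumes l: "l \<in> I"
  shows "(dist_threshold (Gs l) - 1) * card (\<Pi>\<^sub>E i\<in>I - {l}. verts (Gs i)) < dist_threshold PG"
proof (cases "2 \<le> dist_threshold (Gs l)")
  case False
  then show ?thesis using dist_threshold_spec(1)[OF graph_PG] by simp
next
  case True
  define Q where "Q = (\<Pi>\<^sub>E i\<in>I - {l}. verts (Gs i))"
  obtain c where c: "card (c ` verts (Gs l)) = dist_threshold (Gs l) - 1" "\<not> distinguishing (Gs l) c"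
    using dist_threshold_minus_1_coloring[OF graph_factor[OF l] True] by blast
  then obtain s v where s: "automorphism (Gs l) s" "\<forall>v\<in>verts (Gs l). c (s v) = c v"
    and v: "v \<in> verts (Gs l)" "s v \<noteq> v"
    unfolding distinguishing_def by blast
  define C where "C x = (c (x l), x(l := undefined))" for x :: "nat \<Rightarrow> 'a"
  let ?S = "\<lambda>x. x(l := s (x l))"
  have "C ` PV = c ` verts (Gs l) \<times> Q"
    unfolding C_def Q_def by (rule image_PiE_coordinate_split[OF l])
  then have "card (C ` verts PG) = (dist_threshold (Gs l) - 1) * card Q"
    using c(1) by (simp add: verts_cart_prod_family card_cartesian_product)
  moreover have "C (?S x) = C x" if "x \<in> PV" for x
    using s(2) PiE_mem[OF that l] unfolding C_def by simp
  then have "\<forall>x\<in>verts PG. C (?S x) = C x" by (simp add: verts_cart_prod_family)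
  moreover obtain x0 where x0: "x0 \<in> PV" using PV_nonempty by blast
  then have "x0(l := v) \<in> verts PG" "?S (x0(l := v)) \<noteq> x0(l := v)"
    using fun_upd_in_PV[OF x0 l v(1)] v(2) by (simp_all add: verts_cart_prod_family fun_eq_iff)
  ultimately show ?thesis
    using dist_threshold_gt_card_image[OF graph_PG automorphism_fun_upd_factor[OF s(1) l]]
    unfolding Q_def by metis
qed

end

locale distinct_prime_product = connected_product +
  assumes prime_factor: "i \<in> I \<Longrightarrow> prime_graph (Gs i)"
    and nonisomorphic_factors: "i \<in> I \<Longrightarrow> j \<in> I \<Longrightarrow> i \<noteq> j \<Longrightarrow> \<not> isomorphic (Gs i) (Gs j)"
begin

lemma exchange_closed_iso_factor_coordinate_eq:
  assumes S: "S \<subseteq> PV" and closed: "exchange_closed S"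
    and i: "i \<in> I" and iso: "isomorphic (Gs i) (induced PG S)"
    and uy: "u \<in> S" "y \<in> S" "u j \<noteq> y j" and j: "j \<in> I"
    and w: "w \<in> S" and l: "l \<noteq> j"
  shows "w l = y l"
proof (rule ccontr)
  assume ne: "w l \<noteq> y l"
  interpret rest: connected_product Gs "I - {j}"
    using finite_index graph_factor connected_factor by unfold_locales auto
  define A where "A = (\<lambda>x. x j) ` S"
  define B where "B = (\<lambda>x. x(j := undefined)) ` S"
  note split = graph_iso_induced_split[OF S closed j, folded A_def B_def]
  have fin: "finite A" "finite B" unfolding A_def B_def using finite_subset[OF S finite_PV] by simp_all
  have "{u j, y j} \<subseteq> A" unfolding A_def using uy(1,2) by auto
  from card_mono[OF fin(1) this] have A2: "2 \<le> card A" using uy(3) by simp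
  have "w(j := undefined) \<noteq> y(j := undefined)"
  proof
    assume "w(j := undefined) = y(j := undefined)"
    from fun_cong[OF this, of l] show False using ne l by simp
  qed
  moreover have "{w(j := undefined), y(j := undefined)} \<subseteq> B" unfolding B_def using w uy(2) by auto
  from card_mono[OF fin(2) this] have B2: "2 \<le> card B" using calculation by simp
  have "card A * 2 \<le> card A * card B" "2 * card B \<le> card A * card B"
    using mult_le_mono2[OF B2] mult_le_mono1[OF A2] .
  then have card_A: "card (verts (induced (Gs j) A)) < card (verts (Gs i))"
    and card_B: "card (verts (induced rest.PG B)) < card (verts (Gs i))"
    using A2 B2 split(2) isomorphic_card_verts[OF iso] by simp_all
  have "A \<subseteq> verts (Gs j)"
    unfolding A_def by (rule image_subsetI) (rule PiE_mem[OF subsetD[OF S] j])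
  then have graph_A: "graph (induced (Gs j) A)" by (rule graph_induced[OF graph_factor[OF j]])
  have "B \<subseteq> verts rest.PG"
    unfolding B_def verts_cart_prod_family
    by (rule image_subsetI) (rule fun_upd_undefined_in_PiE_Diff[OF subsetD[OF S] j])
  then have graph_B: "graph (induced rest.PG B)" by (rule graph_induced[OF rest.graph_PG])
  show False
    using prime_graph_no_proper_factorization[OF prime_factor[OF i] graph_A graph_B
        isomorphic_trans[OF iso split(1)] card_A card_B] .
qed

lemma exchange_closed_iso_factor_subset_layer:
  assumes S: "S \<subseteq> PV" and closed: "exchange_closed S"
    and i: "i \<in> I" and iso: "isomorphic (Gs i) (induced PG S)" and y: "y \<in> S"
  obtains j where "j \<in> I" "S \<subseteq> layer y j"
proof (cases "S \<subseteq> {y}")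
  case True
  moreover have "y \<in> layer y i" using self_mem_layer[OF subsetD[OF S y] i] .
  ultimately show ?thesis using that[OF i] by blast
next
  case False
  then obtain u where u: "u \<in> S" "u \<noteq> y" by blast
  have "\<not> (\<forall>l\<in>I. u l = y l)" using PiE_ext[OF subsetD[OF S u(1)] subsetD[OF S y]] u(2) by blast
  then obtain j where j: "j \<in> I" "u j \<noteq> y j" by blast
  have "S \<subseteq> layer y j"
    using exchange_closed_iso_factor_coordinate_eq[OF S closed i iso u(1) y j(2) j(1)]
      mem_layer_iff[OF subsetD[OF S y] j(1)] S by blast
  then show ?thesis using that j(1) by blast
qed

lemma automorphism_image_layer_subset:
  assumes f: "automorphism PG f" and x: "x \<in> PV" and i: "i \<in> I"
  obtains j where "j \<in> I" "f ` layer x i \<subseteq> layer (f x) j"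
proof -
  have "f ` layer x i \<subseteq> f ` PV" using layer_subset_PV[OF x i] by (rule image_mono)
  then have "f ` layer x i \<subseteq> PV"
    unfolding bij_betw_imp_surj_on[OF automorphism_PG_bij_betw[OF f]] .
  moreover have "f x \<in> f ` layer x i" using self_mem_layer[OF x i] by (rule imageI)
  ultimately obtain j where "j \<in> I" "f ` layer x i \<subseteq> layer (f x) j"
    using exchange_closed_iso_factor_subset_layer[OF _ exchange_closed_image_layer[OF f x i] i
        isomorphic_factor_image_layer[OF f x i]] by blast
  then show ?thesis by (rule that)
qed

lemma layer_eq_singleton:
  assumes "x \<in> PV" "i \<in> I" "\<forall>a\<in>verts (Gs i). a = x i"
  shows "layer x i = {x}"
proof -
  have "verts (Gs i) = {x i}" using assms PiE_mem[OF assms(1,2)] by blast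
  then show ?thesis unfolding layer_def by simp
qed

lemma layer_subset_layer_imp_eq:
  assumes x: "x \<in> PV" and i: "i \<in> I" and j: "j \<in> I" and a: "a \<in> verts (Gs i)" "a \<noteq> x i"
    and sub: "layer x i \<subseteq> layer x j"
  shows "j = i"
proof -
  have "x(i := a) \<in> layer x i" unfolding layer_def using a(1) by (rule imageI)
  with sub have "x(i := a) \<in> layer x j" by (rule subsetD)
  then have "\<forall>l\<in>I. l \<noteq> j \<longrightarrow> (x(i := a)) l = x l"
    unfolding mem_layer_iff[OF x j] by (rule conjunct2)
  then show ?thesis using i a(2) by auto
qed

lemma automorphism_image_layer:
  assumes f: "automorphism PG f" and x: "x \<in> PV" and i: "i \<in> I"
  shows "f ` layer x i = layer (f x) i"
proof -
  have bij: "bij_betw f PV PV" by (rule automorphism_PG_bij_betw[OF f])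
  have fx: "f x \<in> PV" using bij_betw_apply[OF bij x] .
  show ?thesis
  proof (cases "\<forall>a\<in>verts (Gs i). a = x i")
    case True
    moreover have "(f x) i = x i" using True PiE_mem[OF fx i] by blast
    ultimately show ?thesis using layer_eq_singleton[OF x i] layer_eq_singleton[OF fx i] by simp
  next
    case False
    then obtain a where a: "a \<in> verts (Gs i)" "a \<noteq> x i" by blast
    define g where "g = inv_into PV f"
    have g: "automorphism PG g"
      using automorphism_inv_into[OF f] unfolding g_def verts_cart_prod_family .
    have g_f: "g (f y) = y" if "y \<in> PV" for y
      unfolding g_def using bij that by (simp add: bij_betw_imp_inj_on)
    have f_g: "f (g z) = z" if "z \<in> PV" for z
      unfolding g_def using bij that by (simp add: bij_betw_def f_inv_into_f)
    obtain j where j: "j \<in> I" and sub1: "f ` layer x i \<subseteq> layer (f x) j"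
      by (rule automorphism_image_layer_subset[OF f x i])
    obtain j' where j': "j' \<in> I" and "g ` layer (f x) j \<subseteq> layer (g (f x)) j'"
      by (rule automorphism_image_layer_subset[OF g fx j])
    then have sub2: "g ` layer (f x) j \<subseteq> layer x j'" by (simp only: g_f[OF x])
    have "layer x i \<subseteq> layer x j'"
    proof
      fix y assume y: "y \<in> layer x i"
      then have "f y \<in> layer (f x) j" using subsetD[OF sub1 imageI] by blast
      then have "g (f y) \<in> layer x j'" using subsetD[OF sub2 imageI] by blast
      then show "y \<in> layer x j'" by (simp only: g_f[OF subsetD[OF layer_subset_PV[OF x i] y]])
    qed
    then have "j' = i" by (rule layer_subset_layer_imp_eq[OF x i j' a])
    have "layer (f x) j \<subseteq> f ` layer x i"
    proof
      fix z assume z: "z \<in> layer (f x) j"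
      then have "g z \<in> layer x i" using sub2 \<open>j' = i\<close> by blast
      then have "f (g z) \<in> f ` layer x i" by (rule imageI)
      then show "z \<in> f ` layer x i" by (simp only: f_g[OF subsetD[OF layer_subset_PV[OF fx j] z]])
    qed
    with sub1 have eq: "f ` layer x i = layer (f x) j" by (rule subset_antisym)
    have "isomorphic (Gs i) (induced PG (layer (f x) j))"
      using isomorphic_factor_image_layer[OF f x i] unfolding eq .
    moreover have "isomorphic (induced PG (layer (f x) j)) (Gs j)"
      using graph_iso_inv_into[OF graph_iso_layer[OF fx j]] unfolding isomorphic_def by blast
    ultimately have "isomorphic (Gs i) (Gs j)" by (rule isomorphic_trans)
    then have "i = j" using nonisomorphic_factors[OF i j] by blast
    then show ?thesis using eq by simp
  qed
qed

lemma automorphism_fun_upd_apply: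
  assumes f: "automorphism PG f" and x: "x \<in> PV" and i: "i \<in> I" and a: "a \<in> verts (Gs i)"
    and l: "l \<noteq> i"
  shows "f (x(i := a)) l = f x l"
proof -
  have "x(i := a) \<in> layer x i" unfolding layer_def using a by (rule imageI)
  then have "f (x(i := a)) \<in> layer (f x) i"
    using automorphism_image_layer[OF f x i] by blast
  then obtain b where "f (x(i := a)) = (f x)(i := b)" unfolding layer_def by blast
  then show ?thesis using l by simp
qed

lemma automorphism_apply_eq:
  assumes f: "automorphism PG f" and x: "x \<in> PV" and y: "y \<in> PV" and l: "x l = y l"
  shows "f x l = f y l"
proof -
  let ?mix = "\<lambda>J m. if m \<in> J then y m else x m"
  have mix: "?mix J \<in> PV" for J
  proof (rule PiE_I)
    show "?mix J m \<in> verts (Gs m)" if "m \<in> I" for m using PiE_mem[OF x that] PiE_mem[OF y that] by simp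
    show "?mix J m = undefined" if "m \<notin> I" for m using PiE_arb[OF x that] PiE_arb[OF y that] by simp
  qed
  have "f (?mix J) l = f x l" if "J \<subseteq> I - {l}" for J
    using finite_subset[OF that finite_Diff[OF finite_index]] that
  proof (induction J rule: finite_induct)
    case empty
    then show ?case by simp
  next
    case (insert j J)
    have j: "j \<in> I" "j \<noteq> l" using insert.prems by auto
    have "?mix (insert j J) = (?mix J)(j := y j)" by auto
    then have "f (?mix (insert j J)) l = f (?mix J) l"
      using automorphism_fun_upd_apply[OF f mix j(1) PiE_mem[OF y j(1)] not_sym[OF j(2)]] by simp
    also have "\<dots> = f x l" using insert.IH insert.prems by blast
    finally show ?case .
  qed
  from this[OF order_refl] have "f (?mix (I - {l})) l = f x l" .
  moreover have "?mix (I - {l}) = y"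
  proof
    fix m show "?mix (I - {l}) m = y m"
      using l PiE_arb[OF x, of m] PiE_arb[OF y, of m] by auto
  qed
  ultimately show ?thesis by simp
qed

lemma automorphism_PG_factor:
  assumes f: "automorphism PG f" and l: "l \<in> I"
  obtains \<sigma> where "automorphism (Gs l) \<sigma>" "\<And>x. x \<in> PV \<Longrightarrow> f x l = \<sigma> (x l)"
proof -
  obtain x0 where x0: "x0 \<in> PV" using PV_nonempty by blast
  have fx0: "f x0 \<in> PV" using bij_betw_apply[OF automorphism_PG_bij_betw[OF f] x0] .
  have to_layer: "graph_iso (Gs l) (induced PG (layer (f x0) l)) (f \<circ> (\<lambda>a. x0(l := a)))"
    using graph_iso_comp[OF graph_iso_layer[OF x0 l] graph_iso_image_layer[OF f x0 l]]
    unfolding automorphism_image_layer[OF f x0 l] .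
  have "inv_into (verts (Gs l)) (\<lambda>a. (f x0)(l := a)) w = w l" if w: "w \<in> layer (f x0) l" for w
  proof -
    obtain b where "b \<in> verts (Gs l)" "w = (f x0)(l := b)" using w unfolding layer_def by blast
    moreover have "inj_on (\<lambda>a. (f x0)(l := a)) (verts (Gs l))"
      using graph_iso_bij_betw[OF graph_iso_layer[OF fx0 l]] by (simp add: bij_betw_def)
    ultimately show ?thesis by simp
  qed
  then have from_layer: "graph_iso (induced PG (layer (f x0) l)) (Gs l) (\<lambda>w. w l)"
    using graph_iso_cong[OF graph_iso_inv_into[OF graph_iso_layer[OF fx0 l]]] by simp
  define \<sigma> where "\<sigma> a = f (x0(l := a)) l" for a
  have "graph_iso (Gs l) (Gs l) ((\<lambda>w. w l) \<circ> (f \<circ> (\<lambda>a. x0(l := a))))"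
    using to_layer from_layer by (rule graph_iso_comp)
  moreover have "(\<lambda>w. w l) \<circ> (f \<circ> (\<lambda>a. x0(l := a))) = \<sigma>" unfolding \<sigma>_def by auto
  ultimately have "automorphism (Gs l) \<sigma>" unfolding automorphism_def by simp
  moreover have "f x l = \<sigma> (x l)" if "x \<in> PV" for x
    unfolding \<sigma>_def using automorphism_apply_eq[OF f that fun_upd_in_PV[OF x0 l PiE_mem[OF that l]]] by simp
  ultimately show ?thesis by (rule that)
qed

theorem dist_threshold_PG:
  assumes "I \<noteq> {}"
  shows "dist_threshold PG =
    Max ((\<lambda>i. (dist_threshold (Gs i) - 1) * card (verts (cart_prod_family Gs (I - {i})))) ` I) + 1"
proof -
  define T where "T i = (dist_threshold (Gs i) - 1) * card (verts (cart_prod_family Gs (I - {i})))" for i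
  define M where "M = Max (T ` I)"
  have "dist_threshold PG \<le> M + 1"
  proof (rule dist_threshold_le)
    fix C :: "(nat \<Rightarrow> 'a) \<Rightarrow> nat" assume card_C: "M + 1 \<le> card (C ` verts PG)"
    show "distinguishing PG C"
    proof (rule ccontr)
      assume "\<not> distinguishing PG C"
      then obtain f x where f: "automorphism PG f" "\<forall>x\<in>PV. C (f x) = C x"
        and x: "x \<in> PV" "f x \<noteq> x"
        unfolding distinguishing_def verts_cart_prod_family by blast
      have "f x \<in> PV" using bij_betw_apply[OF automorphism_PG_bij_betw[OF f(1)] x(1)] .
      then obtain l where l: "l \<in> I" "f x l \<noteq> x l" using PiE_ext[OF _ x(1)] x(2) by blast
      obtain \<sigma> where \<sigma>: "automorphism (Gs l) \<sigma>" "\<And>x. x \<in> PV \<Longrightarrow> f x l = \<sigma> (x l)"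
        using automorphism_PG_factor[OF f(1) l(1)] by blast
      have "card (C ` PV) \<le> T l"
        unfolding T_def verts_cart_prod_family
        using card_invariant_colours_le[OF f(1) _ l(1) \<sigma> PiE_mem[OF x(1) l(1)]] f(2) l(2) \<sigma>(2)[OF x(1)]
        by simp
      also have "T l \<le> M" unfolding M_def using finite_index l(1) by simp
      finally show False using card_C by (simp add: verts_cart_prod_family)
    qed
  qed simp
  moreover have "M \<in> T ` I" unfolding M_def using finite_index assms by (intro Max_in) auto
  then obtain i where "i \<in> I" "M = T i" by blast
  then have "M < dist_threshold PG"
    using factor_bound_less_dist_threshold unfolding T_def verts_cart_prod_family by simp
  ultimately show ?thesis unfolding M_def T_def by simp
qed

end

theorem theorem4p1:
  fixes G :: "'b graph" and Gs :: "nat \<Rightarrow> 'a graph" and k :: nat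
  assumes "k \<ge> 2"
    and "graph G"
    and "\<forall>i\<in>{1..k}. graph (Gs i) \<and> connected_graph (Gs i) \<and> prime_graph (Gs i)"
    and "\<forall>i\<in>{1..k}. \<forall>j\<in>{1..k}. i \<noteq> j \<longrightarrow> \<not> isomorphic (Gs i) (Gs j)"
    and "isomorphic G (cart_prod_family Gs {1..k})"
  shows "dist_threshold G =
     Max ((\<lambda>i. (dist_threshold (Gs i) - 1) * card (verts (cart_prod_family Gs ({1..k} - {i}))))
          ` {1..k}) + 1"
proof -
  interpret distinct_prime_product Gs "{1..k}"
    using assms(3,4) by unfold_locales auto
  have "dist_threshold G = dist_threshold (cart_prod_family Gs {1..k})"
    using assms(5) by (rule dist_threshold_isomorphic)
  also have "\<dots> = Max ((\<lambda>i. (dist_threshold (Gs i) - 1) * card (verts (cart_prod_family Gs ({1..k} - {i}))))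
          ` {1..k}) + 1"
    using assms(1) by (intro dist_threshold_PG) auto
  finally show ?thesis .
qed

end
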